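(* Let $n\in\mathbb N$, $\beta>0$, real numbers $\kappa_{n,0},\dots,\kappa_{n,n}$ be given, $\mathbb H=L^2(\mathbb R)$, $(\mathcal Af)(x)=f(x+1)$, $g_n=\sum_{j=0}^nj!\,\kappa_{n,j}\mathbb 1_{[-j,-j+1]}$, and $\bar{\mathcal A}_n:=\mathcal A-\beta\langle g_n,\cdot\rangle\mathbb 1_{[0,1]}$. Then for any $k\in\mathbb N\cup\{0\}$, $$\bar{\mathcal A}_n^k\mathbb 1_{[0,1]}=\sum_{i=0}^k\gamma(i,k)\mathbb 1_{[-i,-i+1]},$$ where $\gamma(0,0)=1$ and, for all $k\ge1$, $$\gamma(i,k)=\begin{cases}\gamma(i-1,k-1),& i=1,\dots,k,\\ \sum_{j=0}^{(k-1)\wedge n}(-\beta)\,j!\,\kappa_{n,j}\,\gamma(j,k-1),& i=0.\end{cases}$$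
   Context: In the paper, $\kappa_{n,k}$ are the coefficients of the Bernstein polynomial approximation $K_n(t)=\sum_{k=0}^n\kappa_{n,k}t^k$ of a kernel $K$, but the identity holds for the stated definitions. $\langle\cdot,\cdot\rangle$ is the $L^2(\mathbb R)$ inner product. *)

theory Defs
  imports "HOL-Analysis.Analysis"
begin

text \<open>Functions in H = L2(R) are represented by real-valued functions on the reals;
  equality in H is equality almost everywhere w.r.t. Lebesgue measure.\<close>

definition L2_inner :: "(real \<Rightarrow> real) \<Rightarrow> (real \<Rightarrow> real) \<Rightarrow> real" where
  "L2_inner f g = (\<integral>x. f x * g x \<partial>lborel)"

definition shiftA :: "(real \<Rightarrow> real) \<Rightarrow> (real \<Rightarrow> real)" where
  "shiftA f = (\<lambda>x. f (x + 1))"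

definition g_fun :: "nat \<Rightarrow> (nat \<Rightarrow> real) \<Rightarrow> real \<Rightarrow> real" where
  "g_fun n \<kappa> = (\<lambda>x. \<Sum>j = 0..n. fact j * \<kappa> j * indicator {- real j .. - real j + 1} x)"

definition Abar :: "real \<Rightarrow> nat \<Rightarrow> (nat \<Rightarrow> real) \<Rightarrow> (real \<Rightarrow> real) \<Rightarrow> (real \<Rightarrow> real)" where
  "Abar \<beta> n \<kappa> f = (\<lambda>x. shiftA f x - \<beta> * L2_inner (g_fun n \<kappa>) f * indicator {0..1::real} x)"

text \<open>The coefficients gamma(i,k); values for i > k are never used.\<close>
fun gamma :: "real \<Rightarrow> nat \<Rightarrow> (nat \<Rightarrow> real) \<Rightarrow> nat \<Rightarrow> nat \<Rightarrow> real" where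
  "gamma \<beta> n \<kappa> 0 0 = 1"
| "gamma \<beta> n \<kappa> (Suc i) 0 = 0"
| "gamma \<beta> n \<kappa> 0 (Suc k) =
     (\<Sum>j = 0..min k n. (- \<beta>) * fact j * \<kappa> j * gamma \<beta> n \<kappa> j k)"
| "gamma \<beta> n \<kappa> (Suc i) (Suc k) = gamma \<beta> n \<kappa> i k"

end

theory Submission
  imports Defs
begin

text \<open>The cells \<open>C\<^sub>i = [-i, -i+1]\<close> are orthonormal in \<open>L\<^sup>2(\<real>)\<close>, and the shift maps the
  indicator of \<open>C\<^sub>i\<close> to that of \<open>C\<^sub>i\<^sub>+\<^sub>1\<close>. So applying \<open>Abar\<close> to
  \<open>\<Sum>\<^sub>i \<gamma>(i,k) 1\<^bsub>C\<^sub>i\<^esub>\<close> moves every coefficient one cell to the left, while the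
  rank-one term only adds a multiple of \<open>1\<^bsub>C\<^sub>0\<^esub>\<close>; by orthonormality its coefficient is
  \<open>-\<beta> \<Sum>{j! \<kappa>\<^sub>j \<gamma>(j,k) | j \<le> min k n}\<close>. This is the recursion defining \<open>\<gamma>(\<cdot>,k+1)\<close>,
  so the identity holds everywhere, by induction on \<open>k\<close>.\<close>

lemma measure_inter_unit_intervals:
  fixes a b :: real
  shows "measure lborel ({a..a+1} \<inter> {b..b+1}) = max 0 (1 - \<bar>a - b\<bar>)"
  by (simp add: Int_atLeastAtMost abs_if max_def min_def)

lemma L2_inner_indicator_unit_intervals:
  fixes a b :: real
  shows "L2_inner (indicator {a..a+1}) (indicator {b..b+1}) = max 0 (1 - \<bar>a - b\<bar>)"
  by (simp add: L2_inner_def indicator_inter_arith[symmetric] measure_inter_unit_intervals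
      del: Int_atLeastAtMost)

lemma L2_inner_indicator_cells:
  "L2_inner (indicator {- real j .. - real j + 1}) (indicator {- real i .. - real i + 1})
     = (if i = j then 1 else 0)"
  unfolding L2_inner_indicator_unit_intervals by simp

lemma integrable_indicator_cells_mult:
  "integrable lborel
     (\<lambda>x. indicator {- real j .. - real j + 1} x * indicator {- real i .. - real i + 1} x :: real)"
  unfolding indicator_inter_arith[symmetric]
  by (rule integrable_real_indicator) (auto simp: emeasure_lborel_Icc_eq)

lemma L2_inner_sum_sum:
  assumes "\<And>j i. j \<in> A \<Longrightarrow> i \<in> B \<Longrightarrow> integrable lborel (\<lambda>x. f j x * h i x)"
  shows "L2_inner (\<lambda>x. \<Sum>j\<in>A. c j * f j x) (\<lambda>x. \<Sum>i\<in>B. d i * h i x)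
     = (\<Sum>j\<in>A. \<Sum>i\<in>B. c j * d i * L2_inner (f j) (h i))"
proof -
  have "L2_inner (\<lambda>x. \<Sum>j\<in>A. c j * f j x) (\<lambda>x. \<Sum>i\<in>B. d i * h i x)
      = (\<integral>x. (\<Sum>j\<in>A. \<Sum>i\<in>B. c j * d i * (f j x * h i x)) \<partial>lborel)"
    unfolding L2_inner_def sum_product by (simp add: mult_ac)
  also have "\<dots> = (\<Sum>j\<in>A. \<Sum>i\<in>B. c j * d i * L2_inner (f j) (h i))"
    unfolding L2_inner_def using assms
    by (simp add: Bochner_Integration.integral_sum Bochner_Integration.integrable_sum)
  finally show ?thesis .
qed

lemma L2_inner_g_fun_cells:
  "L2_inner (g_fun n \<kappa>) (\<lambda>x. \<Sum>i = 0..k. d i * indicator {- real i .. - real i + 1} x)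
     = (\<Sum>j = 0..min k n. fact j * \<kappa> j * d j)"
proof -
  have "L2_inner (g_fun n \<kappa>) (\<lambda>x. \<Sum>i = 0..k. d i * indicator {- real i .. - real i + 1} x)
      = (\<Sum>j = 0..n. \<Sum>i = 0..k. if i = j then fact j * \<kappa> j * d j else 0)"
    unfolding g_fun_def
    by (subst L2_inner_sum_sum, simp only: integrable_indicator_cells_mult,
        simp only: L2_inner_indicator_cells, intro sum.cong refl, simp)
  also have "\<dots> = (\<Sum>j \<in> {0..n} \<inter> {..k}. fact j * \<kappa> j * d j)"
    by (subst sum.inter_restrict) (auto simp: sum.delta)
  also have "{0..n} \<inter> {..k} = {0..min k n}"
    by auto
  finally show ?thesis .
qed

definition gamma_expansion :: "real \<Rightarrow> nat \<Rightarrow> (nat \<Rightarrow> real) \<Rightarrow> nat \<Rightarrow> real \<Rightarrow> real" where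
  "gamma_expansion \<beta> n \<kappa> k =
     (\<lambda>x. \<Sum>i = 0..k. gamma \<beta> n \<kappa> i k * indicator {- real i .. - real i + 1} x)"

lemma Abar_gamma_expansion:
  "Abar \<beta> n \<kappa> (gamma_expansion \<beta> n \<kappa> k) = gamma_expansion \<beta> n \<kappa> (Suc k)"
proof
  fix x :: real
  have shift: "shiftA (gamma_expansion \<beta> n \<kappa> k) x =
      (\<Sum>i = 0..k. gamma \<beta> n \<kappa> (Suc i) (Suc k) * indicator {- real (Suc i) .. - real (Suc i) + 1} x)"
    unfolding shiftA_def gamma_expansion_def by (intro sum.cong) (auto simp: indicator_def)
  have coeff: "\<beta> * L2_inner (g_fun n \<kappa>) (gamma_expansion \<beta> n \<kappa> k) = - gamma \<beta> n \<kappa> 0 (Suc k)"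
    unfolding gamma_expansion_def L2_inner_g_fun_cells by (simp add: sum_distrib_left sum_negf mult_ac)
  show "Abar \<beta> n \<kappa> (gamma_expansion \<beta> n \<kappa> k) x = gamma_expansion \<beta> n \<kappa> (Suc k) x"
    unfolding Abar_def shift coeff gamma_expansion_def[of _ _ _ "Suc k"]
    by (subst sum.atLeast0_atMost_Suc_shift) simp
qed

lemma Abar_power_indicator:
  "(Abar \<beta> n \<kappa> ^^ k) (indicator {0..1}) = gamma_expansion \<beta> n \<kappa> k"
proof (induction k)
  case 0
  show ?case by (simp add: gamma_expansion_def)
next
  case (Suc k)
  then show ?case by (simp add: Abar_gamma_expansion)
qed

theorem proposition3p2:
  fixes n :: nat and \<beta> :: real and \<kappa> :: "nat \<Rightarrow> real" and k :: nat
  assumes "n \<ge> 1" and "\<beta> > 0"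
  shows "AE x in lborel.
    ((Abar \<beta> n \<kappa>) ^^ k) (indicator {0..1::real}) x
      = (\<Sum>i = 0..k. gamma \<beta> n \<kappa> i k * indicator {- real i .. - real i + 1} x)"
  by (simp add: Abar_power_indicator gamma_expansion_def)

end
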